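(* If the dual distance $2$-VC dimension of a graph $G$ is at least $t$, then $K_t$ is a minor of $G$.
   Context: The distance hypergraph $\mathcal{H}(G)$ has vertex set $V(G)$ and, as hyperedges, all balls $B(v,r)=\{u:d(u,v)\leq r\}$ for $v\in V(G)$ and integers $r\geq0$. Its dual $\mathcal{H}(G)^*$ has the hyperedges of $\mathcal{H}(G)$ as vertices and, for each vertex $u$ of $G$, a hyperedge consisting of all balls containing $u$. In a hypergraph, a set $X$ of vertices is $2$-shattered if for every $X'\subseteq X$ with $|X'|=2$ there is a hyperedge $e$ with $e\cap X=X'$; the $2$-VC dimension is the maximum size of a $2$-shattered set. The dual distance $2$-VC dimension of $G$ is the $2$-VC dimension of $\mathcal{H}(G)^*$. Equivalently, it is at least $t$ iff there are balls $B(v_1,r_1),\dots,B(v_t,r_t)$ such that for all $i\neq j$ some vertex $x_{ij}$ satisfies $d(x_{ij},v_i)\le r_i$, $d(x_{ij},v_j)\le r_j$, and $d(x_{ij},v_m)>r_m$ for all $m\notin\{i,j\}$. *)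

theory Defs
  imports Main "HOL-Library.Extended_Nat"
begin

definition simple_graph :: "'a set \<Rightarrow> ('a \<Rightarrow> 'a \<Rightarrow> bool) \<Rightarrow> bool" where
  "simple_graph V E \<longleftrightarrow> finite V \<and> (\<forall>u v. E u v \<longrightarrow> u \<in> V \<and> v \<in> V)
     \<and> (\<forall>u v. E u v \<longrightarrow> E v u) \<and> (\<forall>u. \<not> E u u)"

definition walk_in :: "('a \<Rightarrow> 'a \<Rightarrow> bool) \<Rightarrow> 'a set \<Rightarrow> 'a list \<Rightarrow> bool" where
  "walk_in E S xs \<longleftrightarrow> xs \<noteq> [] \<and> set xs \<subseteq> S \<and> (\<forall>i. Suc i < length xs \<longrightarrow> E (xs ! i) (xs ! Suc i))"

text \<open>Graph distance (infinite if no path).\<close>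
definition gdist :: "'a set \<Rightarrow> ('a \<Rightarrow> 'a \<Rightarrow> bool) \<Rightarrow> 'a \<Rightarrow> 'a \<Rightarrow> enat" where
  "gdist V E u v = (INF n \<in> {n. \<exists>xs. walk_in E V xs \<and> hd xs = u \<and> last xs = v \<and> length xs = Suc n}. enat n)"

definition gball :: "'a set \<Rightarrow> ('a \<Rightarrow> 'a \<Rightarrow> bool) \<Rightarrow> 'a \<Rightarrow> nat \<Rightarrow> 'a set" where
  "gball V E v r = {u \<in> V. gdist V E u v \<le> enat r}"

text \<open>Hypergraphs as (vertex set, set of hyperedges).\<close>
type_synonym 'a hypergraph = "'a set \<times> 'a set set"

definition distance_hypergraph :: "'a set \<Rightarrow> ('a \<Rightarrow> 'a \<Rightarrow> bool) \<Rightarrow> 'a hypergraph" where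
  "distance_hypergraph V E = (V, {gball V E v r | v r. v \<in> V})"

definition dual_hypergraph :: "'a hypergraph \<Rightarrow> 'a set hypergraph" where
  "dual_hypergraph H = (snd H, {{e \<in> snd H. u \<in> e} | u. u \<in> fst H})"

definition k_shattered :: "'a hypergraph \<Rightarrow> nat \<Rightarrow> 'a set \<Rightarrow> bool" where
  "k_shattered H k X \<longleftrightarrow> X \<subseteq> fst H \<and>
     (\<forall>X'. X' \<subseteq> X \<and> finite X' \<and> card X' = k \<longrightarrow> (\<exists>e \<in> snd H. e \<inter> X = X'))"

definition k_VC_dim :: "'a hypergraph \<Rightarrow> nat \<Rightarrow> enat" where
  "k_VC_dim H k = (SUP X \<in> {X. finite X \<and> k_shattered H k X}. enat (card X))"

definition dual_distance_2VC_dim :: "'a set \<Rightarrow> ('a \<Rightarrow> 'a \<Rightarrow> bool) \<Rightarrow> enat" where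
  "dual_distance_2VC_dim V E = k_VC_dim (dual_hypergraph (distance_hypergraph V E)) 2"

text \<open>K_t minor via branch sets: t pairwise disjoint nonempty connected vertex
sets, every two joined by an edge.\<close>
definition connected_set :: "'a set \<Rightarrow> ('a \<Rightarrow> 'a \<Rightarrow> bool) \<Rightarrow> 'a set \<Rightarrow> bool" where
  "connected_set V E S \<longleftrightarrow> S \<subseteq> V \<and>
     (\<forall>x\<in>S. \<forall>y\<in>S. \<exists>xs. walk_in E S xs \<and> hd xs = x \<and> last xs = y)"

definition has_complete_minor :: "'a set \<Rightarrow> ('a \<Rightarrow> 'a \<Rightarrow> bool) \<Rightarrow> nat \<Rightarrow> bool" where
  "has_complete_minor V E t \<longleftrightarrow> (\<exists>B :: nat \<Rightarrow> 'a set.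
     (\<forall>i<t. B i \<noteq> {} \<and> connected_set V E (B i)) \<and>
     (\<forall>i<t. \<forall>j<t. i \<noteq> j \<longrightarrow> B i \<inter> B j = {}) \<and>
     (\<forall>i<t. \<forall>j<t. i \<noteq> j \<longrightarrow> (\<exists>x\<in>B i. \<exists>y\<in>B j. E x y)))"

end

theory Submission
  imports Defs
begin

text \<open>
  Let the balls \<open>B(c i, r i)\<close>, \<open>i < t\<close>, be 2-shattered in the dual distance hypergraph.
  Assign every vertex \<open>u\<close> to the index minimising the additive weight \<open>d(u, c i) - r i\<close>
  (ties go to the smaller index). Along a shortest path towards \<open>c i\<close> the \<open>i\<close>-th weight drops
  by exactly one per step and every other weight by at most one, so each cell is connected.
  For \<open>t \<ge> 3\<close> the centre \<open>c i\<close> lies in cell \<open>i\<close>: otherwise some ball would contain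
  \<open>B(c i, r i)\<close>, hence the witness of \<open>i\<close> and a third index. The witness of a pair
  \<open>{i, j}\<close> has its weights \<open>i\<close> and \<open>j\<close> below all others; this dominance persists
  along a shortest path to the centre of the other index, so the label switches from one
  index to the other across an edge, making the two cells adjacent. For \<open>t \<le> 2\<close> a vertex
  or an edge suffices.
\<close>

lemma walk_in_iff_successively:
  "walk_in E S xs \<longleftrightarrow> xs \<noteq> [] \<and> set xs \<subseteq> S \<and> successively E xs"
  unfolding walk_in_def successively_conv_nth ..

lemma walk_in_Cons:
  "walk_in E S (u # xs) \<longleftrightarrow> u \<in> S \<and> (xs = [] \<or> E u (hd xs) \<and> walk_in E S xs)"
  by (cases xs) (auto simp: walk_in_iff_successively)

lemma walk_in_append:
  assumes "walk_in E S xs" "walk_in E S (y # ys)" "last xs = y"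
  shows "walk_in E S (xs @ ys)"
  using assms by (cases ys) (auto simp: walk_in_iff_successively successively_append_iff)

lemma walk_in_rev:
  assumes "\<And>u v. E u v \<Longrightarrow> E v u" "walk_in E S xs"
  shows "walk_in E S (rev xs)"
  using assms by (auto simp: walk_in_iff_successively intro: successively_mono)

lemma gdist_le_walk:
  "walk_in E V xs \<Longrightarrow> length xs = Suc n \<Longrightarrow> gdist V E (hd xs) (last xs) \<le> enat n"
  unfolding gdist_def by (rule INF_lower2[of n]) auto

lemma gdist_attained:
  assumes "gdist V E u v = enat n"
  obtains xs where "walk_in E V xs" "hd xs = u" "last xs = v" "length xs = Suc n"
proof -
  let ?N = "{n. \<exists>xs. walk_in E V xs \<and> hd xs = u \<and> last xs = v \<and> length xs = Suc n}"
  have "?N \<noteq> {}"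
  proof
    assume "?N = {}"
    then have "gdist V E u v = \<infinity>"
      unfolding gdist_def \<open>?N = {}\<close> by (simp add: top_enat_def)
    with assms show False by simp
  qed
  then obtain m where "enat m \<in> enat ` ?N"
    by blast
  then have "(LEAST x. x \<in> enat ` ?N) \<in> enat ` ?N"
    by (rule LeastI)
  then have "gdist V E u v \<in> enat ` ?N"
    using \<open>?N \<noteq> {}\<close> unfolding gdist_def Inf_enat_def by (simp only: image_is_empty if_False)
  with assms that show ?thesis by auto
qed

lemma gdist_self: "u \<in> V \<Longrightarrow> gdist V E u u = 0"
  using gdist_le_walk[of E V "[u]" 0] by (simp add: walk_in_def flip: zero_enat_def)

lemma gdist_eq_0D:
  assumes "gdist V E u v = 0"
  shows "u = v"
proof -
  obtain xs where "hd xs = u" "last xs = v" "length xs = Suc 0"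
    using assms by (auto simp: zero_enat_def elim: gdist_attained)
  then show ?thesis
    by (cases xs) auto
qed

lemma gdist_finite_in:
  assumes "gdist V E u v = enat n"
  shows "u \<in> V"
proof -
  obtain xs where "walk_in E V xs" "hd xs = u"
    using assms by (rule gdist_attained)
  then show ?thesis
    by (auto simp: walk_in_def)
qed

lemma gdist_edge: "E u w \<Longrightarrow> u \<in> V \<Longrightarrow> w \<in> V \<Longrightarrow> gdist V E u w \<le> 1"
  using gdist_le_walk[of E V "[u, w]" 1] by (simp add: walk_in_Cons one_enat_def)

lemma gdist_triangle: "gdist V E u w \<le> gdist V E u v + gdist V E v w"
proof (cases "gdist V E u v"; cases "gdist V E v w")
  fix a b assume a: "gdist V E u v = enat a" and b: "gdist V E v w = enat b"
  obtain xs where xs: "walk_in E V xs" "hd xs = u" "last xs = v" "length xs = Suc a"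
    using a by (rule gdist_attained)
  obtain ys where ys: "walk_in E V ys" "hd ys = v" "last ys = w" "length ys = Suc b"
    using b by (rule gdist_attained)
  then obtain zs where zs: "ys = v # zs"
    by (cases ys) auto
  have "walk_in E V (xs @ zs)"
    using xs ys zs by (intro walk_in_append) auto
  moreover have "hd (xs @ zs) = u" "last (xs @ zs) = w" "length (xs @ zs) = Suc (a + b)"
    using xs ys zs by (auto simp: walk_in_def)
  ultimately show ?thesis
    using gdist_le_walk[of E V "xs @ zs" "a + b"] a b by simp
qed auto

lemma gdist_step_towards:
  assumes "gdist V E u v = enat (Suc n)"
  obtains w where "E u w" "w \<in> V" "gdist V E w v = enat n"
proof -
  obtain xs where xs: "walk_in E V xs" "hd xs = u" "last xs = v" "length xs = Suc (Suc n)"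
    using assms by (rule gdist_attained)
  then obtain w ys where xs_eq: "xs = u # w # ys"
    by (cases xs; cases "tl xs") auto
  have uw: "E u w" "u \<in> V" "w \<in> V" "walk_in E V (w # ys)"
    using xs(1) by (auto simp: xs_eq walk_in_Cons)
  have "enat (Suc n) \<le> gdist V E u w + gdist V E w v"
    using gdist_triangle[of V E u v w] assms by simp
  also have "\<dots> \<le> 1 + gdist V E w v"
    using uw by (intro add_right_mono gdist_edge)
  finally have "enat (Suc n) \<le> 1 + gdist V E w v" .
  moreover have "gdist V E w v \<le> enat n"
    using gdist_le_walk[OF uw(4), of n] xs by (simp add: xs_eq)
  ultimately have "gdist V E w v = enat n"
    by (cases "gdist V E w v") (auto simp: one_enat_def)
  with uw that show ?thesis
    by blast
qed

lemma walk_along_geodesic: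
  assumes "gdist V E u v = enat n" "u \<in> S"
    and closed: "\<And>x y. x \<in> S \<Longrightarrow> E x y \<Longrightarrow> y \<in> V \<Longrightarrow> gdist V E x v = 1 + gdist V E y v \<Longrightarrow> y \<in> S"
  shows "\<exists>xs. walk_in E S xs \<and> hd xs = u \<and> last xs = v"
  using assms(1,2)
proof (induction n arbitrary: u)
  case 0
  then have "u = v"
    using gdist_eq_0D by (simp add: zero_enat_def)
  with 0 show ?case
    by (intro exI[of _ "[u]"]) (simp add: walk_in_def)
next
  case (Suc n)
  obtain w where w: "E u w" "w \<in> V" "gdist V E w v = enat n"
    using Suc.prems(1) by (rule gdist_step_towards)
  have "w \<in> S"
    using closed[OF Suc.prems(2) w(1,2)] Suc.prems(1) w(3) by (simp add: one_enat_def)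
  then obtain xs where xs: "walk_in E S xs" "hd xs = w" "last xs = v"
    using Suc.IH w(3) by blast
  moreover have "xs \<noteq> []"
    using xs(1) by (simp add: walk_in_def)
  ultimately show ?case
    using w(1) Suc.prems(2) by (intro exI[of _ "u # xs"]) (simp add: walk_in_Cons)
qed

lemma walk_in_crosses:
  assumes "walk_in E S xs" "P (hd xs)" "\<not> P (last xs)"
  shows "\<exists>a\<in>S. \<exists>b\<in>S. E a b \<and> P a \<and> \<not> P b"
  using assms
proof (induction xs)
  case (Cons x xs)
  consider "xs = []" | "xs \<noteq> []" "P (hd xs)" | "xs \<noteq> []" "\<not> P (hd xs)"
    by blast
  then show ?case
  proof cases
    case 2
    with Cons show ?thesis
      by (simp add: walk_in_Cons)
  next
    case 3
    then have "E x (hd xs)" "x \<in> S" "hd xs \<in> S"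
      using Cons.prems(1) by (auto simp: walk_in_Cons walk_in_def[of _ _ xs] dest: hd_in_set)
    with 3 Cons.prems(2) show ?thesis
      by auto
  qed (use Cons.prems in simp)
qed (simp add: walk_in_def)

lemma connected_set_if_walks_to:
  assumes "\<And>u v. E u v \<Longrightarrow> E v u" "S \<subseteq> V"
    and walks: "\<And>x. x \<in> S \<Longrightarrow> \<exists>xs. walk_in E S xs \<and> hd xs = x \<and> last xs = z"
  shows "connected_set V E S"
  unfolding connected_set_def
proof (intro conjI ballI assms(2))
  fix x y assume "x \<in> S" "y \<in> S"
  then obtain xs ys where xs: "walk_in E S xs" "hd xs = x" "last xs = z"
    and ys: "walk_in E S ys" "hd ys = y" "last ys = z"
    using walks by meson
  obtain zs where zs: "rev ys = z # zs"
    using ys by (cases "rev ys") (auto simp: walk_in_def hd_rev)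
  have "walk_in E S (xs @ zs)"
    using xs walk_in_rev[OF assms(1) ys(1)] by (intro walk_in_append) (simp_all add: zs)
  moreover have "last (xs @ zs) = last (rev ys)"
    using xs(3) by (cases zs) (simp_all add: zs)
  moreover have "hd (xs @ zs) = x"
    using xs by (simp add: walk_in_def)
  ultimately show "\<exists>xs. walk_in E S xs \<and> hd xs = x \<and> last xs = y"
    using ys(2) by (auto simp: last_rev)
qed

lemma centre_in_gball: "v \<in> V \<Longrightarrow> v \<in> gball V E v r"
  by (simp add: gball_def gdist_self)

lemma gball_subset_singleton_if_no_edges:
  assumes "\<And>a b. \<not> E a b"
  shows "gball V E v r \<subseteq> {v}"
proof
  fix u assume "u \<in> gball V E v r"
  then obtain n where n: "gdist V E u v = enat n"
    by (cases "gdist V E u v") (auto simp: gball_def)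
  have "n = 0"
  proof (rule ccontr)
    assume "n \<noteq> 0"
    then obtain m where "gdist V E u v = enat (Suc m)"
      using n not0_implies_Suc by blast
    then show False
      using assms by (auto elim: gdist_step_towards)
  qed
  with n show "u \<in> {v}"
    using gdist_eq_0D by (simp add: zero_enat_def)
qed

text \<open>Distinctness of the balls is only needed for \<open>t = 2\<close>; for \<open>t \<ge> 3\<close> it follows
  from the witnesses.\<close>

locale shattering_ball_family =
  fixes V :: "'a set" and E :: "'a \<Rightarrow> 'a \<Rightarrow> bool" and t :: nat
    and c :: "nat \<Rightarrow> 'a" and r :: "nat \<Rightarrow> nat"
  assumes graph: "simple_graph V E"
    and centre_in_V: "\<And>i. i < t \<Longrightarrow> c i \<in> V"
    and balls_distinct: "inj_on (\<lambda>i. gball V E (c i) (r i)) {..<t}"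
    and pair_witness: "\<And>i j. i < t \<Longrightarrow> j < t \<Longrightarrow> i \<noteq> j \<Longrightarrow>
      \<exists>x. x \<in> gball V E (c i) (r i) \<and> x \<in> gball V E (c j) (r j)
        \<and> (\<forall>m<t. m \<noteq> i \<longrightarrow> m \<noteq> j \<longrightarrow> x \<notin> gball V E (c m) (r m))"
begin

abbreviation B :: "nat \<Rightarrow> 'a set" where
  "B i \<equiv> gball V E (c i) (r i)"

lemma edge_sym: "E u v \<Longrightarrow> E v u"
  and edge_in_V: "E u v \<Longrightarrow> u \<in> V \<and> v \<in> V"
  using graph by (auto simp: simple_graph_def)

lemma exists_edge:
  assumes "2 \<le> t"
  shows "\<exists>a b. E a b"
proof (rule ccontr)
  assume no_edge: "\<nexists>a b. E a b"
  have B_eq: "B i = {c i}" if "i < t" for i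
  proof
    show "B i \<subseteq> {c i}"
      using no_edge by (intro gball_subset_singleton_if_no_edges) blast
    show "{c i} \<subseteq> B i"
      using centre_in_gball[OF centre_in_V[OF that]] by blast
  qed
  obtain x where "x \<in> B 0" "x \<in> B 1"
    using pair_witness[of 0 1] assms by auto
  then have "B 0 = B 1"
    using B_eq[of 0] B_eq[of 1] assms by simp
  then show False
    using balls_distinct assms by (auto dest: inj_onD)
qed

end

locale shattering_ball_family_ge3 = shattering_ball_family +
  assumes three_le: "3 \<le> t"
begin

definition radius_sum :: nat where
  "radius_sum = (\<Sum>i<t. r i)"

text \<open>\<open>weight m u\<close> is \<open>d(u, c m) - r m\<close>, shifted by the sum of all radii to stay in \<open>enat\<close>.\<close>

definition weight :: "nat \<Rightarrow> 'a \<Rightarrow> enat" where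
  "weight m u = gdist V E u (c m) + enat (radius_sum - r m)"

definition label :: "'a \<Rightarrow> nat" where
  "label u = (LEAST m. m < t \<and> (\<forall>k<t. weight m u \<le> weight k u))"

definition cell :: "nat \<Rightarrow> 'a set" where
  "cell i = {u \<in> V. gdist V E u (c i) \<noteq> \<infinity> \<and> label u = i}"

lemma r_le_radius_sum: "i < t \<Longrightarrow> r i \<le> radius_sum"
  unfolding radius_sum_def by (rule member_le_sum) auto

lemma mem_B_iff_weight_le:
  assumes "u \<in> V" "i < t"
  shows "u \<in> B i \<longleftrightarrow> weight i u \<le> enat radius_sum"
proof (cases "gdist V E u (c i)")
  case (enat d)
  have "d \<le> r i \<longleftrightarrow> d + (radius_sum - r i) \<le> radius_sum"
    using r_le_radius_sum[OF assms(2)] by (intro iffI) linarith+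
  with enat assms(1) show ?thesis
    by (simp add: gball_def weight_def)
qed (simp add: gball_def weight_def)

lemma weight_triangle: "weight k u \<le> gdist V E u w + weight k w"
proof -
  have "weight k u \<le> (gdist V E u w + gdist V E w (c k)) + enat (radius_sum - r k)"
    unfolding weight_def by (rule add_right_mono[OF gdist_triangle])
  then show ?thesis
    by (simp add: weight_def add.assoc)
qed

lemma weight_via_centre: "i < t \<Longrightarrow> weight i u = gdist V E u (c i) + weight i (c i)"
  by (simp add: weight_def gdist_self centre_in_V)

lemma label_eq_iff:
  "label u = i \<longleftrightarrow> i < t \<and> (\<forall>k<t. weight i u \<le> weight k u) \<and> (\<forall>k<i. weight i u < weight k u)"
proof -
  let ?min = "\<lambda>m. m < t \<and> (\<forall>k<t. weight m u \<le> weight k u)"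
  let ?W = "(\<lambda>k. weight k u) ` {..<t}"
  have W: "finite ?W" "?W \<noteq> {}"
    using three_le by (auto simp: lessThan_empty_iff)
  then have "Min ?W \<in> ?W"
    by (rule Min_in)
  then obtain m where "m < t" "weight m u = Min ?W"
    by auto
  then have "?min m"
    using W(1) by simp
  then have label: "?min (label u)"
    unfolding label_def by (rule LeastI)
  have below: "\<not> ?min k" if "k < label u" for k
    using that unfolding label_def by (rule not_less_Least)
  show ?thesis
  proof
    assume i: "label u = i"
    have "weight i u < weight k u" if k: "k < i" for k
    proof -
      obtain k' where "k' < t" "weight k' u < weight k u"
        using below[of k] k i label by (auto simp: not_le)
      then show ?thesis
        using i label by (auto intro: order.strict_trans1)
    qed
    with i label show "i < t \<and> (\<forall>k<t. weight i u \<le> weight k u) \<and> (\<forall>k<i. weight i u < weight k u)"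
      by blast
  next
    assume i: "i < t \<and> (\<forall>k<t. weight i u \<le> weight k u) \<and> (\<forall>k<i. weight i u < weight k u)"
    show "label u = i"
      unfolding label_def
    proof (rule Least_equality)
      show "?min i"
        using i by blast
      show "i \<le> y" if "?min y" for y
        using i that by (meson leD not_le_imp_less)
    qed
  qed
qed

lemma label_less: "label u < t"
  using label_eq_iff by blast

lemma label_minimal: "k < t \<Longrightarrow> weight (label u) u \<le> weight k u"
  using label_eq_iff by blast

lemma label_eqI_strict:
  assumes "i < t" "\<And>k. k < t \<Longrightarrow> k \<noteq> i \<Longrightarrow> weight i u < weight k u"
  shows "label u = i"
proof -
  have "weight i u \<le> weight k u" if "k < t" for k
    using assms(2)[OF that] by (cases "k = i") simp_all
  with assms show ?thesis
    by (simp add: label_eq_iff)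
qed

lemma label_dominated:
  assumes "i < t" "\<And>k. k < t \<Longrightarrow> k \<noteq> i \<Longrightarrow> k \<noteq> j \<Longrightarrow> weight i u < weight k u"
  shows "label u = i \<or> label u = j"
proof (rule ccontr)
  assume "\<not> (label u = i \<or> label u = j)"
  then have "weight i u < weight (label u) u"
    using assms(2) label_less by blast
  with label_minimal[OF assms(1)] show False
    by (simp add: leD)
qed

lemma label_centre:
  assumes "i < t"
  shows "label (c i) = i"
proof (rule label_eqI_strict[OF assms])
  fix k assume k: "k < t" "k \<noteq> i"
  txt \<open>Otherwise \<open>B k\<close> contains \<open>B i\<close>, in particular the witness of \<open>i\<close> and a third index.\<close>
  have "\<exists>m<3. m \<noteq> i \<and> m \<noteq> k"
    by presburger
  then obtain m where m: "m < 3" "m \<noteq> i" "m \<noteq> k"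
    by blast
  then obtain x where "x \<in> B i" "\<forall>m'<t. m' \<noteq> i \<longrightarrow> m' \<noteq> m \<longrightarrow> x \<notin> B m'"
    using pair_witness[OF assms _ m(2)[symmetric]] three_le by fastforce
  then have x: "x \<in> B i" "x \<notin> B k"
    using k m(3) by auto
  have xV: "x \<in> V"
    using x(1) by (simp add: gball_def)
  show "weight i (c i) < weight k (c i)"
  proof (rule ccontr)
    assume "\<not> weight i (c i) < weight k (c i)"
    then have "weight k (c i) \<le> weight i (c i)"
      by (simp add: not_less)
    have "weight k x \<le> gdist V E x (c i) + weight k (c i)"
      by (rule weight_triangle)
    also have "\<dots> \<le> gdist V E x (c i) + weight i (c i)"
      using \<open>weight k (c i) \<le> weight i (c i)\<close> by (rule add_left_mono)
    also have "\<dots> = weight i x"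
      by (rule weight_via_centre[OF assms, symmetric])
    also have "\<dots> \<le> enat radius_sum"
      using x(1) mem_B_iff_weight_le[OF xV assms] by simp
    finally show False
      using x(2) mem_B_iff_weight_le[OF xV k(1)] by simp
  qed
qed

lemma weight_step_towards:
  assumes "E x y" "gdist V E x (c i) = 1 + gdist V E y (c i)"
  shows "weight i x = 1 + weight i y" "weight k x \<le> 1 + weight k y"
proof -
  show "weight i x = 1 + weight i y"
    using assms(2) by (simp add: weight_def add.assoc)
  have "weight k x \<le> gdist V E x y + weight k y"
    by (rule weight_triangle)
  also have "\<dots> \<le> 1 + weight k y"
    using assms(1) edge_in_V[OF assms(1)] by (intro add_right_mono gdist_edge) auto
  finally show "weight k x \<le> 1 + weight k y" .
qed

lemma label_step_towards_centre:
  assumes "label x = i" "E x y" "gdist V E x (c i) = 1 + gdist V E y (c i)"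
  shows "label y = i"
proof -
  note step = weight_step_towards[OF assms(2,3)]
  have x_min: "i < t" "\<And>k. k < t \<Longrightarrow> weight i x \<le> weight k x"
    "\<And>k. k < i \<Longrightarrow> weight i x < weight k x"
    using assms(1) label_eq_iff by blast+
  have "weight i y \<le> weight k y" if "k < t" for k
  proof -
    have "1 + weight i y \<le> weight k x"
      using x_min(2)[OF that] by (simp only: step(1))
    also have "\<dots> \<le> 1 + weight k y"
      by (rule step(2))
    finally show ?thesis
      by (simp add: enat_add_left_cancel_le)
  qed
  moreover have "weight i y < weight k y" if "k < i" for k
  proof -
    have "1 + weight i y < weight k x"
      using x_min(3)[OF that] by (simp only: step(1))
    also have "\<dots> \<le> 1 + weight k y"
      by (rule step(2))
    finally show ?thesis
      by (simp add: enat_add_left_cancel_less)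
  qed
  ultimately show ?thesis
    using x_min(1) label_eq_iff by blast
qed

lemma cell_connected: "connected_set V E (cell i)"
proof (rule connected_set_if_walks_to[OF edge_sym])
  show "cell i \<subseteq> V"
    by (auto simp: cell_def)
  fix x assume x: "x \<in> cell i"
  then obtain n where n: "gdist V E x (c i) = enat n"
    by (auto simp: cell_def)
  have closed: "z \<in> cell i"
    if "y \<in> cell i" "E y z" "z \<in> V" "gdist V E y (c i) = 1 + gdist V E z (c i)" for y z
    using that label_step_towards_centre[of y i z]
    by (simp add: cell_def plus_eq_infty_iff_enat del: not_infinity_eq)
  show "\<exists>xs. walk_in E (cell i) xs \<and> hd xs = x \<and> last xs = c i"
    using n x closed by (rule walk_along_geodesic)
qed

lemma weight_eq_infinity_iff: "weight k u = \<infinity> \<longleftrightarrow> gdist V E u (c k) = \<infinity>"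
  by (simp add: weight_def plus_eq_infty_iff_enat)

lemma edge_between_cells_along_geodesic:
  assumes ij: "i < t" "i \<noteq> j" and x: "label x = j" "gdist V E x (c i) = enat n"
    and dominated: "\<And>k. k < t \<Longrightarrow> k \<noteq> i \<Longrightarrow> k \<noteq> j \<Longrightarrow> weight i x < weight k x"
  shows "\<exists>a\<in>cell j. \<exists>b\<in>cell i. E a b"
proof -
  define S where "S = {y \<in> V. gdist V E y (c i) \<noteq> \<infinity> \<and>
    (\<forall>k<t. k \<noteq> i \<longrightarrow> k \<noteq> j \<longrightarrow> weight i y < weight k y)}"
  have closed: "z \<in> S"
    if y: "y \<in> S" and z: "E y z" "z \<in> V" "gdist V E y (c i) = 1 + gdist V E z (c i)" for y z
  proof -
    note step = weight_step_towards[OF z(1,3)]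
    have "weight i z < weight k z" if k: "k < t" "k \<noteq> i" "k \<noteq> j" for k
    proof -
      have "1 + weight i z < weight k y"
        using y k unfolding S_def by (simp add: step(1)[symmetric])
      also have "\<dots> \<le> 1 + weight k z"
        by (rule step(2))
      finally show ?thesis
        by (simp add: enat_add_left_cancel_less)
    qed
    moreover have "gdist V E z (c i) \<noteq> \<infinity>"
      using y z(3) unfolding S_def by (simp add: plus_eq_infty_iff_enat del: not_infinity_eq)
    ultimately show ?thesis
      using z(2) unfolding S_def by blast
  qed
  have "x \<in> S"
    using x dominated gdist_finite_in[OF x(2)] unfolding S_def by simp
  with x(2) have "\<exists>xs. walk_in E S xs \<and> hd xs = x \<and> last xs = c i"
    using closed by (rule walk_along_geodesic)
  then obtain xs where xs: "walk_in E S xs" "hd xs = x" "last xs = c i"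
    by blast
  have "label (last xs) \<noteq> j"
    using xs(3) label_centre ij by simp
  then obtain a b where ab: "a \<in> S" "b \<in> S" "E a b" "label a = j" "label b \<noteq> j"
    using walk_in_crosses[OF xs(1), of "\<lambda>y. label y = j"] xs(2) x(1) by blast
  have "weight i a \<noteq> \<infinity>"
    using ab(1) weight_eq_infinity_iff unfolding S_def by simp
  moreover have "weight j a \<le> weight i a"
    using label_minimal[OF ij(1), of a] ab(4) by simp
  ultimately have "weight j a \<noteq> \<infinity>"
    by (auto dest: enat_ile)
  then have "a \<in> cell j"
    using ab(1,4) weight_eq_infinity_iff unfolding S_def cell_def by simp
  have "\<And>k. k < t \<Longrightarrow> k \<noteq> i \<Longrightarrow> k \<noteq> j \<Longrightarrow> weight i b < weight k b"
    using ab(2) unfolding S_def by simp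
  then have "label b = i"
    using label_dominated[OF ij(1)] ab(5) by blast
  then have "b \<in> cell i"
    using ab(2) unfolding S_def cell_def by simp
  with \<open>a \<in> cell j\<close> ab(3) show ?thesis
    by blast
qed

lemma cells_adjacent:
  assumes ij: "i < t" "j < t" "i \<noteq> j"
  shows "\<exists>a\<in>cell i. \<exists>b\<in>cell j. E a b"
proof -
  obtain x where x: "x \<in> B i" "x \<in> B j" "\<forall>m<t. m \<noteq> i \<longrightarrow> m \<noteq> j \<longrightarrow> x \<notin> B m"
    using pair_witness[OF ij] by blast
  have xV: "x \<in> V"
    using x(1) by (simp add: gball_def)
  have "weight i x \<le> enat radius_sum" "weight j x \<le> enat radius_sum"
    using x(1,2) mem_B_iff_weight_le[OF xV ij(1)] mem_B_iff_weight_le[OF xV ij(2)] by simp_all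
  moreover have "enat radius_sum < weight k x" if "k < t" "k \<noteq> i" "k \<noteq> j" for k
    using x(3) that mem_B_iff_weight_le[OF xV that(1)] by (simp add: not_le)
  ultimately have dom_i: "\<And>k. k < t \<Longrightarrow> k \<noteq> i \<Longrightarrow> k \<noteq> j \<Longrightarrow> weight i x < weight k x"
    and dom_j: "\<And>k. k < t \<Longrightarrow> k \<noteq> j \<Longrightarrow> k \<noteq> i \<Longrightarrow> weight j x < weight k x"
    by (blast intro: le_less_trans)+
  have "gdist V E x (c i) \<le> enat (r i)" "gdist V E x (c j) \<le> enat (r j)"
    using x(1,2) by (simp_all add: gball_def)
  then obtain ni nj where ni: "gdist V E x (c i) = enat ni" and nj: "gdist V E x (c j) = enat nj"
    by (metis enat_ile)
  consider "label x = i" | "label x = j"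
    using label_dominated[OF ij(1) dom_i] by blast
  then show ?thesis
  proof cases
    case 1
    then show ?thesis
      using edge_between_cells_along_geodesic[OF ij(2) ij(3)[symmetric]] dom_j nj by blast
  next
    case 2
    then have "\<exists>a\<in>cell j. \<exists>b\<in>cell i. E a b"
      using edge_between_cells_along_geodesic[OF ij(1) ij(3)] dom_i ni by blast
    then show ?thesis
      using edge_sym by blast
  qed
qed

lemma centre_in_cell: "i < t \<Longrightarrow> c i \<in> cell i"
  by (simp add: cell_def centre_in_V gdist_self label_centre del: not_infinity_eq)

theorem has_complete_minor: "has_complete_minor V E t"
  unfolding has_complete_minor_def
proof (intro exI[of _ cell] conjI allI impI)
  fix i j assume "i < t" "j < t" "i \<noteq> j"
  then show "cell i \<inter> cell j = {}"
    by (auto simp: cell_def)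
  show "\<exists>x\<in>cell i. \<exists>y\<in>cell j. E x y"
    using \<open>i < t\<close> \<open>j < t\<close> \<open>i \<noteq> j\<close> by (rule cells_adjacent)
qed (use centre_in_cell cell_connected in blast)+

end

lemma connected_set_singleton: "v \<in> V \<Longrightarrow> connected_set V E {v}"
  unfolding connected_set_def by (auto intro!: exI[of _ "[v]"] simp: walk_in_def)

lemma has_complete_minor_0: "has_complete_minor V E 0"
  unfolding has_complete_minor_def by blast

lemma has_complete_minor_1: "v \<in> V \<Longrightarrow> has_complete_minor V E 1"
  unfolding has_complete_minor_def by (auto intro!: exI[of _ "\<lambda>_. {v}"] connected_set_singleton)

lemma has_complete_minor_2:
  assumes "simple_graph V E" "E a b"
  shows "has_complete_minor V E 2"
proof -
  have "a \<in> V" "b \<in> V" "a \<noteq> b" "E b a"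
    using assms by (auto simp: simple_graph_def)
  then show ?thesis
    unfolding has_complete_minor_def using assms(2)
    by (intro exI[of _ "\<lambda>i. if i = 0 then {a} else {b}"])
      (auto simp: less_2_cases_iff connected_set_singleton)
qed

lemma k_shattered_subset:
  assumes "k_shattered H k X" "Y \<subseteq> X"
  shows "k_shattered H k Y"
  unfolding k_shattered_def
proof (intro conjI allI impI)
  show "Y \<subseteq> fst H"
    using assms by (auto simp: k_shattered_def)
  fix Y' assume Y': "Y' \<subseteq> Y \<and> finite Y' \<and> card Y' = k"
  then obtain e where "e \<in> snd H" "e \<inter> X = Y'"
    using assms unfolding k_shattered_def by blast
  with Y' assms(2) show "\<exists>e\<in>snd H. e \<inter> Y = Y'"
    by blast
qed

lemma k_shattered_set_of_card:
  assumes "enat t \<le> k_VC_dim H k" "0 < t"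
  obtains Y where "finite Y" "card Y = t" "k_shattered H k Y"
proof -
  have "enat (t - 1) < enat t"
    using assms(2) by simp
  also have "\<dots> \<le> (SUP X \<in> {X. finite X \<and> k_shattered H k X}. enat (card X))"
    using assms(1) unfolding k_VC_dim_def .
  finally obtain X where X: "finite X" "k_shattered H k X" "t \<le> card X"
    by (auto simp: less_SUP_iff)
  then obtain Y where Y: "Y \<subseteq> X" "card Y = t"
    by (meson obtain_subset_with_card_n)
  show ?thesis
  proof (rule that)
    show "finite Y"
      using Y(1) X(1) by (rule finite_subset)
    show "k_shattered H k Y"
      using X(2) Y(1) by (rule k_shattered_subset)
  qed (rule Y(2))
qed

lemma dual_distance_2shattered_pair:
  assumes Y: "k_shattered (dual_hypergraph (distance_hypergraph V E)) 2 Y"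
    and B: "B \<in> Y" "B' \<in> Y" "B \<noteq> B'"
  shows "\<exists>x\<in>V. x \<in> B \<and> x \<in> B' \<and> (\<forall>B''\<in>Y. x \<in> B'' \<longrightarrow> B'' = B \<or> B'' = B')"
proof -
  let ?balls = "{gball V E v r | v r. v \<in> V}"
  have balls: "Y \<subseteq> ?balls"
    using Y by (simp add: k_shattered_def dual_hypergraph_def distance_hypergraph_def)
  have pair: "{B, B'} \<subseteq> Y \<and> finite {B, B'} \<and> card {B, B'} = 2"
    using B by auto
  have "\<forall>X'. X' \<subseteq> Y \<and> finite X' \<and> card X' = 2 \<longrightarrow>
      (\<exists>e\<in>snd (dual_hypergraph (distance_hypergraph V E)). e \<inter> Y = X')"
    using Y by (simp add: k_shattered_def)
  from this[rule_format, OF pair] obtain e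
    where e: "e \<in> snd (dual_hypergraph (distance_hypergraph V E))" "e \<inter> Y = {B, B'}"
    by blast
  from e(1) obtain x where x: "x \<in> V" "e = {b \<in> ?balls. x \<in> b}"
    by (auto simp: dual_hypergraph_def distance_hypergraph_def)
  have "x \<in> B" "x \<in> B'"
    using e(2) x(2) by blast+
  moreover have "B'' = B \<or> B'' = B'" if "B'' \<in> Y" "x \<in> B''" for B''
  proof -
    have "B'' \<in> e \<inter> Y"
      using that balls x(2) by blast
    then show ?thesis
      using e(2) by blast
  qed
  ultimately show ?thesis
    using x(1) by blast
qed

lemma shattering_ball_family_if_dual_distance_2VC_dim_ge:
  assumes graph: "simple_graph V E" and dim: "enat t \<le> dual_distance_2VC_dim V E"
  obtains c r where "shattering_ball_family V E t c r"
proof (cases "t = 0")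
  case True
  then show ?thesis
    using that by (simp add: shattering_ball_family_def graph)
next
  case False
  let ?H = "dual_hypergraph (distance_hypergraph V E)"
  from False have "0 < t"
    by simp
  with dim obtain Y where Y: "finite Y" "card Y = t" "k_shattered ?H 2 Y"
    unfolding dual_distance_2VC_dim_def by (rule k_shattered_set_of_card)
  then obtain f where f: "bij_betw f {..<t} Y"
    by (metis ex_bij_betw_nat_finite lessThan_atLeast0)
  have "\<forall>i\<in>{..<t}. \<exists>p. fst p \<in> V \<and> f i = gball V E (fst p) (snd p)"
  proof
    fix i assume "i \<in> {..<t}"
    then have "f i \<in> Y"
      using f by (auto dest: bij_betw_apply)
    then obtain v q where "v \<in> V" "f i = gball V E v q"
      using Y(3) by (auto simp: k_shattered_def dual_hypergraph_def distance_hypergraph_def)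
    then show "\<exists>p. fst p \<in> V \<and> f i = gball V E (fst p) (snd p)"
      by (intro exI[of _ "(v, q)"]) simp
  qed
  then obtain p where "\<forall>i\<in>{..<t}. fst (p i) \<in> V \<and> f i = gball V E (fst (p i)) (snd (p i))"
    by (rule bchoice[THEN exE])
  then have p: "\<And>i. i < t \<Longrightarrow> fst (p i) \<in> V \<and> f i = gball V E (fst (p i)) (snd (p i))"
    by simp
  have "shattering_ball_family V E t (fst \<circ> p) (snd \<circ> p)"
  proof
    show "simple_graph V E" by (rule graph)
    show "(fst \<circ> p) i \<in> V" if "i < t" for i
      using p[OF that] by simp
    show "inj_on (\<lambda>i. gball V E ((fst \<circ> p) i) ((snd \<circ> p) i)) {..<t}"
      using bij_betw_imp_inj_on[OF f] p by (auto simp: inj_on_def)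
    show "\<exists>x. x \<in> gball V E ((fst \<circ> p) i) ((snd \<circ> p) i) \<and> x \<in> gball V E ((fst \<circ> p) j) ((snd \<circ> p) j)
      \<and> (\<forall>m<t. m \<noteq> i \<longrightarrow> m \<noteq> j \<longrightarrow> x \<notin> gball V E ((fst \<circ> p) m) ((snd \<circ> p) m))"
      if ij: "i < t" "j < t" "i \<noteq> j" for i j
    proof -
      have "f i \<in> Y" "f j \<in> Y" "f i \<noteq> f j"
        using f ij by (auto simp: bij_betw_def inj_on_def)
      then obtain x where x: "x \<in> f i" "x \<in> f j" "\<forall>B\<in>Y. x \<in> B \<longrightarrow> B = f i \<or> B = f j"
        using dual_distance_2shattered_pair[OF Y(3)] by blast
      have "x \<notin> f m" if "m < t" "m \<noteq> i" "m \<noteq> j" for m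
        using x(3) f that ij by (auto simp: bij_betw_def inj_on_def)
      with x ij p show ?thesis
        by auto
    qed
  qed
  then show ?thesis
    by (rule that)
qed

theorem theorem6:
  fixes V :: "'a set" and E :: "'a \<Rightarrow> 'a \<Rightarrow> bool" and t :: nat
  assumes "simple_graph V E"
    and "enat t \<le> dual_distance_2VC_dim V E"
  shows "has_complete_minor V E t"
proof -
  obtain c r where "shattering_ball_family V E t c r"
    using assms by (rule shattering_ball_family_if_dual_distance_2VC_dim_ge)
  then interpret shattering_ball_family V E t c r .
  consider "t = 0" | "t = 1" | "t = 2" | "3 \<le> t"
    by linarith
  then show ?thesis
  proof cases
    case 1
    show ?thesis
      unfolding 1 by (rule has_complete_minor_0)
  next
    case 2
    then have "c 0 \<in> V"
      by (intro centre_in_V) simp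
    then show ?thesis
      unfolding 2 by (rule has_complete_minor_1)
  next
    case 3
    then obtain a b where "E a b"
      using exists_edge by auto
    then show ?thesis
      unfolding 3 by (rule has_complete_minor_2[OF assms(1)])
  next
    case 4
    then interpret shattering_ball_family_ge3 V E t c r
      by unfold_locales
    show ?thesis
      by (rule has_complete_minor)
  qed
qed

end
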